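(* The interacting particle system is non-explosive: for every $f\in F_0(G)$, $$P_f\Big(\sum_{n=1}^\infty\xi_n=\infty\Big)=1 .$$
   Context: A graph is a quadruple $G=(V,E,K,m)$: $V$ is a finite or countable set of nodes, which are elements of a real Hilbert space $\mathcal H$ with inner product "$\cdot$" and norm $|\cdot|$; $E$ is a set of undirected edges (at most one edge between any two distinct nodes, no self-loops); the edge between $x$ and $y$ is written $\langle x,y\rangle=\langle y,x\rangle$, and $y\sim x$ means this edge exists; $K=(k_{xy})_{x,y\in V}$ with $k_{xy}=k_{yx}\ge0$ and $k_{xy}=0$ if there is no edge; $m=(m_x)_{x\in V}$ with $m_x>0$. Let $e_{xy}=(y-x)/|y-x|$. Assume $d_0=\sup_{x\in V}\#\{y:y\sim x\}<\infty$, set $d=\max\{d_0,2\}$, and assume $M=\max\{\sup_{x\in V}m_x^{-1},\sup_{\langle x,y\rangle\in E}k_{xy}\}<\infty$. $V=V_0\cup V_1$ is a fixed partition into disjoint sets. $F(G)$ is the set of functions $f$ assigning a real number $f(x)$ to each $x\in V$ and a vector $f(\langle x,y\rangle)\in\mathcal H$ that is a real multiple of $y-x$ to each edge. For $1\le\alpha<\infty$, $\|f\|_\alpha=\big(\sum_{x\in V}|f(x)|^\alpha/m_x+\sum_{\langle x,y\rangle\in E}k_{xy}|f(\langle x,y\rangle)|^\alpha\big)^{1/\alpha}$, and $\|f\|_\infty=\max\{\sup_x|f(x)|,\sup_{\langle x,y\rangle}|f(\langle x,y\rangle)|\}$. $F_0(G)$ is the set of $f\in F(G)$ with finitely many nonzero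 values such that $|f(x)|\in\mathbb Z$ and $|f(\langle x,y\rangle)|\in\mathbb Z$ for all nodes and edges. The interacting particle system (IPS) $(f_t)_{t\ge0}$ is the continuous-time Markov jump process on $F_0(G)$ with the following transitions from state $f$: (i) for each $x\in V$, at rate $|f(x)|/m_x$, for every $y\sim x$ the edge value $f(\langle x,y\rangle)$ is replaced by $f(\langle x,y\rangle)+\mathrm{sgn}(f(x))\,e_{yx}$ (all other values unchanged); (ii) for each edge $\langle x,y\rangle$, at rate $k_{xy}|f(\langle x,y\rangle)|$, with $s=\mathrm{sgn}(f(\langle x,y\rangle)\cdot e_{xy})$, the value $f(x)$ is replaced by $f(x)+s$ if $x\in V_0$ and $f(y)$ by $f(y)-s$ if $y\in V_0$ (values at nodes of $V_1$ never change; this rule is symmetric in $x,y$). $P_f,\mathbb E_f$ denote probability and expectation given $f_0=f$. $\tau_0=0$, $\tau_n$ is the time of the $n$-th jump, $\xi_n=\tau_n-\tau_{n-1}$, $h_n=f_{\tau_n}$, and $\eta_t=\sup\{n:\tau_n\le t\}$. *)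

theory Defs
  imports "HOL-Probability.Probability"
begin

text \<open>Graph encoding: nodes V are points of a real Hilbert space 'h; the edge set E is a
set of two-element subsets {x,y} of V; the conductances k and edge values are indexed by
the unordered edge {x,y}.\<close>

type_synonym 'h ips_state = "('h \<Rightarrow> real) \<times> ('h set \<Rightarrow> 'h)"

definition unitv :: "'h::real_normed_vector \<Rightarrow> 'h \<Rightarrow> 'h" where
  "unitv x y = (1 / norm (y - x)) *\<^sub>R (y - x)"

definition good_graph ::
  "'h::{real_inner,complete_space} set \<Rightarrow> 'h set set \<Rightarrow> ('h set \<Rightarrow> real) \<Rightarrow> ('h \<Rightarrow> real) \<Rightarrow> 'h set \<Rightarrow> bool" where
  "good_graph V E k m V0 \<longleftrightarrow>
     countable V \<and>
     (\<forall>\<epsilon>\<in>E. \<exists>x y. \<epsilon> = {x, y} \<and> x \<in> V \<and> y \<in> V \<and> x \<noteq> y) \<and>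
     (\<forall>\<epsilon>\<in>E. k \<epsilon> \<ge> 0) \<and>
     (\<forall>x\<in>V. m x > 0) \<and>
     (\<exists>D::nat. \<forall>x\<in>V. finite {y. {x, y} \<in> E} \<and> card {y. {x, y} \<in> E} \<le> D) \<and>
     (\<exists>B::real. (\<forall>x\<in>V. 1 / m x \<le> B) \<and> (\<forall>\<epsilon>\<in>E. k \<epsilon> \<le> B)) \<and>
     V0 \<subseteq> V"

definition F0 :: "'h::real_inner set \<Rightarrow> 'h set set \<Rightarrow> 'h ips_state set" where
  "F0 V E = {(f, fe).
     (\<forall>x. x \<notin> V \<longrightarrow> f x = 0) \<and> (\<forall>\<epsilon>. \<epsilon> \<notin> E \<longrightarrow> fe \<epsilon> = 0) \<and>
     finite {x. f x \<noteq> 0} \<and> finite {\<epsilon>. fe \<epsilon> \<noteq> 0} \<and>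
     (\<forall>x y. {x, y} \<in> E \<longrightarrow> (\<exists>c::real. fe {x, y} = c *\<^sub>R (y - x))) \<and>
     (\<forall>x. \<bar>f x\<bar> \<in> \<int>) \<and> (\<forall>\<epsilon>. norm (fe \<epsilon>) \<in> \<int>)}"

definition node_step :: "'h set set \<Rightarrow> 'h::real_inner \<Rightarrow> 'h ips_state \<Rightarrow> 'h ips_state" where
  "node_step E x st = (case st of (f, fe) \<Rightarrow>
     (f, \<lambda>\<epsilon>. if \<epsilon> \<in> E \<and> x \<in> \<epsilon> then fe \<epsilon> + sgn (f x) *\<^sub>R unitv (the_elem (\<epsilon> - {x})) x
              else fe \<epsilon>))"

definition edge_step_or :: "'h set \<Rightarrow> 'h::real_inner \<Rightarrow> 'h \<Rightarrow> 'h ips_state \<Rightarrow> 'h ips_state" where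
  "edge_step_or V0 x y st = (case st of (f, fe) \<Rightarrow>
     (let s = sgn (fe {x, y} \<bullet> unitv x y) in
      (\<lambda>z. if z = x \<and> x \<in> V0 then f x + s
           else if z = y \<and> y \<in> V0 then f y - s else f z, fe)))"

text \<open>Transition (ii) for the unordered edge (the rule is symmetric in x,y).\<close>
definition edge_step :: "'h set \<Rightarrow> 'h::real_inner set \<Rightarrow> 'h ips_state \<Rightarrow> 'h ips_state" where
  "edge_step V0 \<epsilon> st = (THE g. \<exists>x y. \<epsilon> = {x, y} \<and> x \<noteq> y \<and> g = edge_step_or V0 x y st)"

definition total_rate ::
  "'h set \<Rightarrow> 'h set set \<Rightarrow> ('h set \<Rightarrow> real) \<Rightarrow> ('h \<Rightarrow> real) \<Rightarrow> 'h::real_inner ips_state \<Rightarrow> real" where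
  "total_rate V E k m st = (case st of (f, fe) \<Rightarrow>
     (\<Sum>x\<in>{x\<in>V. f x \<noteq> 0}. \<bar>f x\<bar> / m x) + (\<Sum>\<epsilon>\<in>{\<epsilon>\<in>E. fe \<epsilon> \<noteq> 0}. k \<epsilon> * norm (fe \<epsilon>)))"

definition jump_rate ::
  "'h set \<Rightarrow> 'h set set \<Rightarrow> ('h set \<Rightarrow> real) \<Rightarrow> ('h \<Rightarrow> real) \<Rightarrow> 'h set \<Rightarrow>
   'h::real_inner ips_state \<Rightarrow> 'h ips_state \<Rightarrow> real" where
  "jump_rate V E k m V0 st st' = (case st of (f, fe) \<Rightarrow>
     (\<Sum>x\<in>{x\<in>V. f x \<noteq> 0}. if node_step E x st = st' then \<bar>f x\<bar> / m x else 0) +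
     (\<Sum>\<epsilon>\<in>{\<epsilon>\<in>E. fe \<epsilon> \<noteq> 0}. if edge_step V0 \<epsilon> st = st' then k \<epsilon> * norm (fe \<epsilon>) else 0))"

definition jump_prob ::
  "'h set \<Rightarrow> 'h set set \<Rightarrow> ('h set \<Rightarrow> real) \<Rightarrow> ('h \<Rightarrow> real) \<Rightarrow> 'h set \<Rightarrow>
   'h::real_inner ips_state \<Rightarrow> 'h ips_state \<Rightarrow> real" where
  "jump_prob V E k m V0 st st' =
     (if total_rate V E k m st = 0 then (if st' = st then 1 else 0)
      else jump_rate V E k m V0 st st' / total_rate V E k m st)"

text \<open>(h_n, xi_n) on the probability space M is a realisation of the IPS started at f:
h n = f_{tau_n} is the jump chain, xi n = tau_n - tau_(n-1) (n \<ge> 1) the holding times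
(xi = \<infinity> once the chain is absorbed). Their joint law is fixed through all finite-dimensional
distributions: given h_0..h_(n-1), the next state is chosen with the jump-chain probabilities
and the holding time in h_(i-1) is exponential with parameter the total rate, independently.\<close>
definition is_IPS ::
  "'h set \<Rightarrow> 'h set set \<Rightarrow> ('h set \<Rightarrow> real) \<Rightarrow> ('h \<Rightarrow> real) \<Rightarrow> 'h set \<Rightarrow> 'h::real_inner ips_state \<Rightarrow>
   'w measure \<Rightarrow> (nat \<Rightarrow> 'w \<Rightarrow> 'h ips_state) \<Rightarrow> (nat \<Rightarrow> 'w \<Rightarrow> ennreal) \<Rightarrow> bool" where
  "is_IPS V E k m V0 f M h \<xi> \<longleftrightarrow>
     prob_space M \<and>
     (\<forall>n. h n \<in> M \<rightarrow>\<^sub>M count_space UNIV) \<and>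
     (\<forall>n. \<xi> n \<in> borel_measurable M) \<and>
     (\<forall>(n::nat) (g::nat \<Rightarrow> 'h ips_state) (t::nat \<Rightarrow> real).
        (\<forall>i\<in>{1..n}. t i \<ge> 0) \<longrightarrow>
        measure M {\<omega> \<in> space M. (\<forall>i\<le>n. h i \<omega> = g i) \<and> (\<forall>i\<in>{1..n}. \<xi> i \<omega> > ennreal (t i))}
        = (if g 0 = f then 1 else 0) *
          (\<Prod>i\<in>{1..n}. jump_prob V E k m V0 (g (i - 1)) (g i)
                         * exp (- total_rate V E k m (g (i - 1)) * t i)))"

end

theory Submission
  imports Defs "HOL-Analysis.Harmonic_Numbers"
begin

text \<open>A single jump raises the total rate by a bounded amount: a node jump adds at most one unit
  to each of the boundedly many incident edges, an edge jump moves at most one unit at its two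
  endpoints. Hence along every path of the jump chain the rate before the \<open>i\<close>-th jump is at most
  \<open>A * i\<close>, and the \<open>i\<close>-th holding time exceeds \<open>1 / (A * i)\<close> with probability at least \<open>1/e\<close>.
  These thresholds sum like the harmonic series, so a Chernoff bound over the set of holding times
  falling below their thresholds gives \<open>P(\<xi>\<^sub>1 + \<dots> + \<xi>\<^sub>n \<le> T) \<le> exp (A * T - H\<^sub>n / (2 * e)) \<longrightarrow> 0\<close>.\<close>

lemma norm_unitv_le: "norm (unitv x y) \<le> 1"
  by (cases "x = y") (simp_all add: unitv_def)

lemma unitv_commute: "unitv y x = - unitv x y"
  unfolding unitv_def by (metis minus_diff_eq norm_minus_commute scaleR_minus_right)

lemma sum_support_perturb:
  fixes a a' :: "'a \<Rightarrow> 'b::real_normed_vector" and w :: "'a \<Rightarrow> real"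
  assumes fin: "finite {z\<in>U. a z \<noteq> 0}" and S: "finite S" "S \<subseteq> U"
    and w_nonneg: "\<And>z. z \<in> U \<Longrightarrow> 0 \<le> w z" and w_le: "\<And>z. z \<in> S \<Longrightarrow> w z \<le> c"
    and outside: "\<And>z. z \<notin> S \<Longrightarrow> a' z = a z"
    and inside: "\<And>z. z \<in> S \<Longrightarrow> norm (a' z) \<le> norm (a z) + 1"
  shows "finite {z\<in>U. a' z \<noteq> 0}"
    and "(\<Sum>z\<in>{z\<in>U. a' z \<noteq> 0}. w z * norm (a' z))
           \<le> (\<Sum>z\<in>{z\<in>U. a z \<noteq> 0}. w z * norm (a z)) + c * card S"
proof -
  let ?R = "{z\<in>U. a z \<noteq> 0} \<union> S"
  have R: "finite ?R" "?R \<subseteq> U" "{z\<in>U. a' z \<noteq> 0} \<subseteq> ?R"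
    using fin S outside by auto
  then show "finite {z\<in>U. a' z \<noteq> 0}" by (blast intro: finite_subset)
  have "(\<Sum>z\<in>{z\<in>U. a' z \<noteq> 0}. w z * norm (a' z)) = (\<Sum>z\<in>?R. w z * norm (a' z))"
    using R by (intro sum.mono_neutral_left) auto
  also have "\<dots> \<le> (\<Sum>z\<in>?R. w z * norm (a z) + (if z \<in> S then c else 0))"
  proof (rule sum_mono)
    fix z assume "z \<in> ?R"
    then have "0 \<le> w z" using R w_nonneg by blast
    then show "w z * norm (a' z) \<le> w z * norm (a z) + (if z \<in> S then c else 0)"
      using inside[of z] w_le[of z] outside[of z] mult_left_mono[of "norm (a' z)" "norm (a z) + 1" "w z"]
      by (auto simp: algebra_simps)
  qed
  also have "\<dots> = (\<Sum>z\<in>?R. w z * norm (a z)) + c * card S"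
    using R S by (simp add: sum.distrib sum.inter_restrict[symmetric] Int_absorb1)
  also have "(\<Sum>z\<in>?R. w z * norm (a z)) = (\<Sum>z\<in>{z\<in>U. a z \<noteq> 0}. w z * norm (a z))"
    using R by (intro sum.mono_neutral_right) auto
  finally show "(\<Sum>z\<in>{z\<in>U. a' z \<noteq> 0}. w z * norm (a' z))
      \<le> (\<Sum>z\<in>{z\<in>U. a z \<noteq> 0}. w z * norm (a z)) + c * card S" .
qed

lemma sum_subsets_threshold_le:
  fixes p d :: "'a \<Rightarrow> real"
  assumes I: "finite I" and a: "0 \<le> a" and p: "\<And>i. i \<in> I \<Longrightarrow> 0 \<le> p i \<and> p i \<le> 1"
  shows "(\<Sum>J\<in>{J. J \<subseteq> I \<and> (\<Sum>i\<in>I - J. d i) \<le> T}. (\<Prod>i\<in>I - J. p i) * (\<Prod>i\<in>J. 1 - p i))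
           \<le> exp (a * T) * (\<Prod>i\<in>I. 1 - p i + p i * exp (- a * d i))"
proof -
  let ?F = "\<lambda>J. exp (a * T) * ((\<Prod>i\<in>J. 1 - p i) * (\<Prod>i\<in>I - J. p i * exp (- a * d i)))"
  have F_nonneg: "0 \<le> ?F J" if "J \<subseteq> I" for J
    using that p by (intro mult_nonneg_nonneg prod_nonneg) auto
  have "(\<Sum>J\<in>{J. J \<subseteq> I \<and> (\<Sum>i\<in>I - J. d i) \<le> T}. (\<Prod>i\<in>I - J. p i) * (\<Prod>i\<in>J. 1 - p i))
        \<le> (\<Sum>J\<in>{J. J \<subseteq> I \<and> (\<Sum>i\<in>I - J. d i) \<le> T}. ?F J)"
  proof (rule sum_mono)
    fix J assume J: "J \<in> {J. J \<subseteq> I \<and> (\<Sum>i\<in>I - J. d i) \<le> T}"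
    \<comment> \<open>Chernoff: the factor \<open>exp (a * (T - \<Sum>i\<in>I - J. d i))\<close> is at least 1 on this range of \<open>J\<close>.\<close>
    have "1 \<le> exp (a * (T - (\<Sum>i\<in>I - J. d i)))" using J a by simp
    moreover have "0 \<le> (\<Prod>i\<in>I - J. p i) * (\<Prod>i\<in>J. 1 - p i)"
      using J p by (intro mult_nonneg_nonneg prod_nonneg) auto
    ultimately have "(\<Prod>i\<in>I - J. p i) * (\<Prod>i\<in>J. 1 - p i)
        \<le> exp (a * (T - (\<Sum>i\<in>I - J. d i))) * ((\<Prod>i\<in>I - J. p i) * (\<Prod>i\<in>J. 1 - p i))"
      by (simp add: mult_le_cancel_right1)
    also have "\<dots> = ?F J"
    proof -
      have "(\<Prod>i\<in>I - J. p i * exp (- a * d i)) = (\<Prod>i\<in>I - J. p i) * exp (- a * (\<Sum>i\<in>I - J. d i))"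
        using I by (simp add: prod.distrib exp_sum sum_distrib_left)
      moreover have "exp (a * (T - (\<Sum>i\<in>I - J. d i))) = exp (a * T) * exp (- a * (\<Sum>i\<in>I - J. d i))"
        by (simp flip: exp_add add: algebra_simps)
      ultimately show ?thesis by simp
    qed
    finally show "(\<Prod>i\<in>I - J. p i) * (\<Prod>i\<in>J. 1 - p i) \<le> ?F J" .
  qed
  also have "\<dots> \<le> (\<Sum>J\<in>Pow I. ?F J)"
    using I F_nonneg by (intro sum_mono2) auto
  also have "\<dots> = exp (a * T) * (\<Prod>i\<in>I. 1 - p i + p i * exp (- a * d i))"
    using I by (simp add: prod_add sum_distrib_left)
  finally show ?thesis .
qed

lemma one_minus_exp_minus_ge:
  fixes u :: real
  assumes "0 \<le> u" "u \<le> 1"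
  shows "u / 2 \<le> 1 - exp (- u)"
proof -
  have "exp (- u) \<le> inverse (1 + u)"
    unfolding exp_minus using assms exp_ge_add_one_self[of u] by (intro le_imp_inverse_le) auto
  moreover have "inverse (1 + u) \<le> 1 - u / 2"
  proof -
    have "u * u \<le> u" using assms by (simp add: mult_left_le)
    then have "1 \<le> (1 - u / 2) * (1 + u)" by (simp add: algebra_simps)
    then show ?thesis using assms by (simp add: inverse_eq_divide divide_le_eq)
  qed
  ultimately show ?thesis by linarith
qed

lemma holding_factor_le:
  fixes p u :: real
  assumes "exp (-1) \<le> p" "p \<le> 1" "0 \<le> u" "u \<le> 1"
  shows "1 - p + p * exp (- u) \<le> exp (- u / (2 * exp 1))"
proof -
  have "u / (2 * exp 1) = exp (-1) * (u / 2)" by (simp add: exp_minus inverse_eq_divide)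
  also have "\<dots> \<le> p * (1 - exp (- u))"
    using assms one_minus_exp_minus_ge[of u] order_trans[OF exp_ge_zero assms(1)] by (intro mult_mono) auto
  finally have "1 - p + p * exp (- u) \<le> 1 + (- u / (2 * exp 1))"
    by (simp add: algebra_simps)
  also have "\<dots> \<le> exp (- u / (2 * exp 1))" by (rule exp_ge_add_one_self)
  finally show ?thesis .
qed

lemma prod_holding_factors_le:
  fixes p :: "nat \<Rightarrow> real"
  assumes "\<And>i. i \<in> {1..n} \<Longrightarrow> exp (-1) \<le> p i \<and> p i \<le> 1"
  shows "(\<Prod>i\<in>{1..n}. 1 - p i + p i * exp (- 1 / real i)) \<le> exp (- harm n / (2 * exp 1))"
proof -
  have "(\<Prod>i\<in>{1..n}. 1 - p i + p i * exp (- 1 / real i)) \<le> (\<Prod>i\<in>{1..n}. exp (- (1 / real i) / (2 * exp 1)))"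
  proof (rule prod_mono)
    fix i assume i: "i \<in> {1..n}"
    have "0 \<le> p i" using assms[OF i] by (meson exp_ge_zero order_trans)
    then have "0 \<le> p i * exp (- 1 / real i)" "p i \<le> 1" using assms[OF i] by simp_all
    then show "0 \<le> 1 - p i + p i * exp (- 1 / real i) \<and>
        1 - p i + p i * exp (- 1 / real i) \<le> exp (- (1 / real i) / (2 * exp 1))"
      using i assms[OF i] holding_factor_le[of "p i" "1 / real i"] by auto
  qed
  also have "\<dots> = exp (- harm n / (2 * exp 1))"
    by (simp add: exp_sum[symmetric] harm_def sum_negf sum_divide_distrib inverse_eq_divide)
  finally show ?thesis .
qed

locale bounded_rate_graph =
  fixes V :: "'h::real_inner set" and E :: "'h set set" and k :: "'h set \<Rightarrow> real"
    and m :: "'h \<Rightarrow> real" and V0 :: "'h set" and D :: nat and B :: real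
  assumes edge_endpoints: "\<epsilon> \<in> E \<Longrightarrow> \<exists>x y. \<epsilon> = {x, y} \<and> x \<in> V \<and> y \<in> V \<and> x \<noteq> y"
    and k_nonneg: "\<epsilon> \<in> E \<Longrightarrow> 0 \<le> k \<epsilon>"
    and m_pos: "x \<in> V \<Longrightarrow> 0 < m x"
    and degree_le: "x \<in> V \<Longrightarrow> finite {y. {x, y} \<in> E} \<and> card {y. {x, y} \<in> E} \<le> D"
    and inverse_m_le: "x \<in> V \<Longrightarrow> 1 / m x \<le> B"
    and k_le: "\<epsilon> \<in> E \<Longrightarrow> k \<epsilon> \<le> B"
    and B_nonneg: "0 \<le> B"
begin

abbreviation rate :: "'h ips_state \<Rightarrow> real" where
  "rate \<equiv> total_rate V E k m"

definition finitely_supported :: "'h ips_state \<Rightarrow> bool" where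
  "finitely_supported st \<longleftrightarrow> finite {x\<in>V. fst st x \<noteq> 0} \<and> finite {\<epsilon>\<in>E. snd st \<epsilon> \<noteq> 0}"

lemma rate_eq:
  "rate (a, b) = (\<Sum>x\<in>{x\<in>V. a x \<noteq> 0}. 1 / m x * norm (a x)) + (\<Sum>\<epsilon>\<in>{\<epsilon>\<in>E. b \<epsilon> \<noteq> 0}. k \<epsilon> * norm (b \<epsilon>))"
  by (simp add: total_rate_def)

lemma rate_nonneg: "0 \<le> rate st"
  using m_pos k_nonneg
  by (cases st) (auto simp: total_rate_def intro!: add_nonneg_nonneg sum_nonneg divide_nonneg_pos)

definition incident :: "'h \<Rightarrow> 'h set set" where
  "incident x = {\<epsilon>\<in>E. x \<in> \<epsilon>}"

lemma incident_bounded: "finite (incident x) \<and> card (incident x) \<le> D"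
proof (cases "x \<in> V")
  case True
  have "incident x = (\<lambda>y. {x, y}) ` {y. {x, y} \<in> E}"
  proof
    show "incident x \<subseteq> (\<lambda>y. {x, y}) ` {y. {x, y} \<in> E}"
    proof
      fix \<epsilon> assume "\<epsilon> \<in> incident x"
      then obtain y z where "\<epsilon> = {y, z}" "\<epsilon> \<in> E" "x \<in> \<epsilon>"
        using edge_endpoints unfolding incident_def by blast
      then show "\<epsilon> \<in> (\<lambda>y. {x, y}) ` {y. {x, y} \<in> E}" by (auto simp: insert_commute)
    qed
  qed (auto simp: incident_def)
  then show ?thesis using degree_le[OF True] card_image_le le_trans by (metis finite_imageI)
next
  case False
  then have "incident x = {}" unfolding incident_def by (auto dest: edge_endpoints)
  then show ?thesis by simp
qed

lemma node_step_rate_le: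
  assumes "finitely_supported st"
  shows "finitely_supported (node_step E x st) \<and> rate (node_step E x st) \<le> rate st + B * D"
proof -
  obtain a b where st: "st = (a, b)" by fastforce
  let ?jump = "\<lambda>\<epsilon>. sgn (a x) *\<^sub>R unitv (the_elem (\<epsilon> - {x})) x"
  define b' where "b' = (\<lambda>\<epsilon>. if \<epsilon> \<in> incident x then b \<epsilon> + ?jump \<epsilon> else b \<epsilon>)"
  have step: "node_step E x (a, b) = (a, b')"
    unfolding b'_def node_step_def incident_def by simp
  have norm_le: "norm (b' \<epsilon>) \<le> norm (b \<epsilon>) + 1" if "\<epsilon> \<in> incident x" for \<epsilon>
  proof -
    have "norm (b' \<epsilon>) \<le> norm (b \<epsilon>) + norm (?jump \<epsilon>)"
      unfolding b'_def if_P[OF that] by (rule norm_triangle_ineq)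
    moreover have "norm (?jump \<epsilon>) \<le> 1"
      by (simp add: abs_sgn_eq norm_unitv_le)
    ultimately show ?thesis by linarith
  qed
  have outside: "b' \<epsilon> = b \<epsilon>" if "\<epsilon> \<notin> incident x" for \<epsilon>
    using that by (simp add: b'_def)
  have fin: "finite {\<epsilon>\<in>E. b \<epsilon> \<noteq> 0}"
    using assms by (simp add: st finitely_supported_def)
  have incident: "finite (incident x)" "incident x \<subseteq> E" "\<And>\<epsilon>. \<epsilon> \<in> incident x \<Longrightarrow> k \<epsilon> \<le> B"
    using incident_bounded k_le by (auto simp: incident_def)
  note perturb = sum_support_perturb[of E b "incident x" k B b', OF fin incident(1,2) k_nonneg
      incident(3) outside norm_le]
  have "B * card (incident x) \<le> B * D"
    using incident_bounded B_nonneg by (simp add: mult_left_mono)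
  then show ?thesis
    using assms perturb unfolding st step rate_eq finitely_supported_def by auto
qed

lemma edge_step_or_commute:
  assumes "x \<noteq> y"
  shows "edge_step_or V0 y x st = edge_step_or V0 x y st"
proof -
  obtain a b where st: "st = (a, b)" by fastforce
  have sgn_swap: "sgn (b {y, x} \<bullet> unitv y x) = - sgn (b {x, y} \<bullet> unitv x y)"
    unfolding insert_commute[of y x] unitv_commute[of y x] by (simp add: sgn_minus)
  show ?thesis
    using assms unfolding st edge_step_or_def Let_def by (auto intro!: ext simp: sgn_swap)
qed

lemma edge_step_eq:
  assumes "x \<noteq> y"
  shows "edge_step V0 {x, y} st = edge_step_or V0 x y st"
  unfolding edge_step_def
proof (rule the_equality)
  fix g assume "\<exists>x' y'. {x, y} = {x', y'} \<and> x' \<noteq> y' \<and> g = edge_step_or V0 x' y' st"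
  then show "g = edge_step_or V0 x y st"
    by (auto simp: doubleton_eq_iff edge_step_or_commute[OF assms])
qed (use assms in blast)

lemma edge_step_rate_le:
  assumes "\<epsilon> \<in> E" "finitely_supported st"
  shows "finitely_supported (edge_step V0 \<epsilon> st) \<and> rate (edge_step V0 \<epsilon> st) \<le> rate st + 2 * B"
proof -
  obtain x y where xy: "\<epsilon> = {x, y}" "x \<in> V" "y \<in> V" "x \<noteq> y" using edge_endpoints[OF assms(1)] by blast
  obtain a b where st: "st = (a, b)" by fastforce
  define s where "s = sgn (b {x, y} \<bullet> unitv x y)"
  define a' where "a' z = (if z = x \<and> x \<in> V0 then a x + s else if z = y \<and> y \<in> V0 then a y - s else a z)"
    for z
  have step: "edge_step V0 \<epsilon> (a, b) = (a', b)"
    unfolding xy(1) edge_step_eq[OF xy(4)] edge_step_or_def Let_def a'_def s_def by simp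
  have "\<bar>s\<bar> \<le> 1" unfolding s_def by (simp add: abs_sgn_eq)
  then have norm_le: "norm (a' z) \<le> norm (a z) + 1" if "z \<in> {x, y}" for z
    unfolding a'_def real_norm_def by (simp split: if_split; arith)
  have outside: "a' z = a z" if "z \<notin> {x, y}" for z
    using that by (simp add: a'_def)
  have fin: "finite {z\<in>V. a z \<noteq> 0}"
    using assms(2) by (simp add: st finitely_supported_def)
  have ends: "finite {x, y}" "{x, y} \<subseteq> V" "\<And>z. z \<in> V \<Longrightarrow> 0 \<le> 1 / m z"
    "\<And>z. z \<in> {x, y} \<Longrightarrow> 1 / m z \<le> B"
    using xy m_pos inverse_m_le by (auto simp: less_imp_le)
  note perturb = sum_support_perturb[of V a "{x, y}" "\<lambda>z. 1 / m z" B a', OF fin ends outside norm_le]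
  have "B * card {x, y} = 2 * B" using xy(4) by simp
  then show ?thesis
    using assms(2) perturb unfolding st step rate_eq finitely_supported_def by auto
qed

definition rate_growth :: real where
  "rate_growth = B * D + 2 * B"

lemma rate_growth_nonneg: "0 \<le> rate_growth"
  unfolding rate_growth_def using B_nonneg by simp

text \<open>The state itself is a successor, since an absorbed state jumps to itself with probability 1.\<close>
definition successors :: "'h ips_state \<Rightarrow> 'h ips_state set" where
  "successors st = insert st ((\<lambda>x. node_step E x st) ` {x\<in>V. fst st x \<noteq> 0}
      \<union> (\<lambda>\<epsilon>. edge_step V0 \<epsilon> st) ` {\<epsilon>\<in>E. snd st \<epsilon> \<noteq> 0})"

lemma finite_successors: "finitely_supported st \<Longrightarrow> finite (successors st)"
  unfolding successors_def finitely_supported_def by simp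

lemma successor_rate_le:
  assumes "finitely_supported st" "s \<in> successors st"
  shows "finitely_supported s \<and> rate s \<le> rate st + rate_growth"
proof -
  have growth: "B * D \<le> rate_growth" "2 * B \<le> rate_growth"
    unfolding rate_growth_def using B_nonneg by auto
  from assms(2) consider "s = st" | x where "s = node_step E x st"
    | \<epsilon> where "\<epsilon> \<in> E" "s = edge_step V0 \<epsilon> st"
    unfolding successors_def by blast
  then show ?thesis
  proof cases
    case 1
    then show ?thesis using assms(1) rate_growth_nonneg by simp
  next
    case (2 x)
    then show ?thesis using node_step_rate_le[OF assms(1), of x] growth(1) by simp
  next
    case (3 \<epsilon>)
    then show ?thesis using edge_step_rate_le[OF 3(1) assms(1)] growth(2) by simp
  qed
qed

lemma sum_jump_rate_successors:
  assumes "finitely_supported st"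
  shows "(\<Sum>s\<in>successors st. jump_rate V E k m V0 st s) = rate st"
proof -
  obtain a b where st: "st = (a, b)" by fastforce
  let ?X = "{x\<in>V. a x \<noteq> 0}" and ?Y = "{\<epsilon>\<in>E. b \<epsilon> \<noteq> 0}"
  have fin: "finite ?X" "finite ?Y" "finite (successors st)"
    using assms finite_successors unfolding finitely_supported_def st by auto
  have "(\<Sum>s\<in>successors st. jump_rate V E k m V0 st s) =
      (\<Sum>x\<in>?X. \<Sum>s\<in>successors st. if node_step E x st = s then \<bar>a x\<bar> / m x else 0)
    + (\<Sum>\<epsilon>\<in>?Y. \<Sum>s\<in>successors st. if edge_step V0 \<epsilon> st = s then k \<epsilon> * norm (b \<epsilon>) else 0)"
    unfolding jump_rate_def st by (simp add: sum.distrib sum.swap[of _ "successors (a, b)"])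
  also have "\<dots> = (\<Sum>x\<in>?X. \<bar>a x\<bar> / m x) + (\<Sum>\<epsilon>\<in>?Y. k \<epsilon> * norm (b \<epsilon>))"
    using fin by (simp add: sum.delta' successors_def st)
  finally show ?thesis by (simp add: total_rate_def st)
qed

lemma sum_jump_prob_successors:
  assumes "finitely_supported st"
  shows "(\<Sum>s\<in>successors st. jump_prob V E k m V0 st s) = 1"
proof (cases "rate st = 0")
  case True
  then show ?thesis
    using finite_successors[OF assms] by (simp add: jump_prob_def sum.delta successors_def)
next
  case False
  then show ?thesis
    using sum_jump_rate_successors[OF assms] by (simp add: jump_prob_def flip: sum_divide_distrib)
qed

lemma F0_finitely_supported: "st \<in> F0 V E \<Longrightarrow> finitely_supported st"
  unfolding F0_def finitely_supported_def by (auto intro: finite_subset)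

end

locale ips_realisation = bounded_rate_graph V E k m V0 D B
  for V :: "'h::real_inner set" and E k m V0 D B +
  fixes f :: "'h ips_state" and M :: "'w measure"
    and h :: "nat \<Rightarrow> 'w \<Rightarrow> 'h ips_state" and \<xi> :: "nat \<Rightarrow> 'w \<Rightarrow> ennreal"
  assumes finitely_supported_start: "finitely_supported f"
    and realisation: "is_IPS V E k m V0 f M h \<xi>"
begin

sublocale prob_space M
  using realisation unfolding is_IPS_def by auto

lemma measurable_state[measurable]: "h i \<in> M \<rightarrow>\<^sub>M count_space UNIV"
  using realisation unfolding is_IPS_def by auto

lemma measurable_holding[measurable]: "\<xi> i \<in> borel_measurable M"
  using realisation unfolding is_IPS_def by auto

definition path_weight :: "(nat \<Rightarrow> 'h ips_state) \<Rightarrow> nat \<Rightarrow> real" where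
  "path_weight g n = (if g 0 = f then 1 else 0) * (\<Prod>i\<in>{1..n}. jump_prob V E k m V0 (g (i - 1)) (g i))"

definition path_event :: "(nat \<Rightarrow> 'h ips_state) \<Rightarrow> nat \<Rightarrow> nat set \<Rightarrow> (nat \<Rightarrow> real) \<Rightarrow> 'w set" where
  "path_event g n J t = {\<omega>\<in>space M. (\<forall>i\<le>n. h i \<omega> = g i) \<and>
     (\<forall>i\<in>{1..n}. if i \<in> J then 0 < \<xi> i \<omega> \<and> \<xi> i \<omega> \<le> ennreal (t i) else ennreal (t i) < \<xi> i \<omega>)}"

lemma path_event_sets[measurable]: "path_event g n J t \<in> sets M"
  unfolding path_event_def by measurable

lemma path_event_insert:
  assumes "j \<in> {1..n}" "j \<notin> J"
  shows "path_event g n (insert j J) t = path_event g n J (t(j := 0)) - path_event g n J t"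
proof -
  define W where "W J t i \<omega> \<longleftrightarrow>
    (if i \<in> J then 0 < \<xi> i \<omega> \<and> \<xi> i \<omega> \<le> ennreal (t i) else ennreal (t i) < \<xi> i \<omega>)"
    for J t i \<omega>
  have event: "path_event g n J t = {\<omega>\<in>space M. (\<forall>i\<le>n. h i \<omega> = g i) \<and> (\<forall>i\<in>{1..n}. W J t i \<omega>)}"
    for J t
    unfolding path_event_def W_def by simp
  have other: "W (insert j J) t i \<omega> = W J t i \<omega>" "W J (t(j := 0)) i \<omega> = W J t i \<omega>"
    if "i \<noteq> j" for i \<omega>
    using that by (simp_all add: W_def)
  have at_j: "W (insert j J) t j \<omega> \<longleftrightarrow> W J (t(j := 0)) j \<omega> \<and> \<not> W J t j \<omega>" for \<omega>
    using assms(2) by (auto simp: W_def not_less)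
  have "(\<forall>i\<in>{1..n}. W (insert j J) t i \<omega>) \<longleftrightarrow>
      (\<forall>i\<in>{1..n}. W J (t(j := 0)) i \<omega>) \<and> \<not> (\<forall>i\<in>{1..n}. W J t i \<omega>)" for \<omega>
    using assms(1) other at_j by metis
  then show ?thesis
    unfolding event by blast
qed

lemma prob_path_event_empty:
  assumes "\<forall>i\<in>{1..n}. 0 \<le> t i"
  shows "prob (path_event g n {} t) = path_weight g n * (\<Prod>i\<in>{1..n}. exp (- rate (g (i - 1)) * t i))"
proof -
  have "path_event g n {} t =
      {\<omega> \<in> space M. (\<forall>i\<le>n. h i \<omega> = g i) \<and> (\<forall>i\<in>{1..n}. \<xi> i \<omega> > ennreal (t i))}"
    unfolding path_event_def by simp
  then show ?thesis
    using realisation assms unfolding is_IPS_def path_weight_def by (simp add: prod.distrib)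
qed

lemma prob_path_event:
  assumes "J \<subseteq> {1..n}" "\<forall>i\<in>{1..n}. 0 \<le> t i"
  shows "prob (path_event g n J t) = path_weight g n
      * (\<Prod>i\<in>{1..n} - J. exp (- rate (g (i - 1)) * t i)) * (\<Prod>i\<in>J. 1 - exp (- rate (g (i - 1)) * t i))"
  using finite_subset[OF assms(1) finite_atLeastAtMost] assms
proof (induction J arbitrary: t rule: finite_induct)
  case empty
  then show ?case by (simp add: prob_path_event_empty)
next
  case (insert j J)
  let ?e = "\<lambda>t i. exp (- rate (g (i - 1)) * t i)"
  have j: "j \<in> {1..n}" "j \<notin> J" and J: "J \<subseteq> {1..n}" using insert by auto
  have t0: "\<forall>i\<in>{1..n}. 0 \<le> (t(j := 0)) i" using insert.prems by simp
  have "path_event g n J t \<subseteq> path_event g n J (t(j := 0))"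
    using j insert.prems unfolding path_event_def by (auto intro: order.strict_trans1[rotated])
  then have "prob (path_event g n (insert j J) t)
      = prob (path_event g n J (t(j := 0))) - prob (path_event g n J t)"
    unfolding path_event_insert[OF j] by (intro finite_measure_Diff) auto
  also have "\<dots> = path_weight g n * (\<Prod>i\<in>{1..n} - J. ?e (t(j := 0)) i) * (\<Prod>i\<in>J. 1 - ?e (t(j := 0)) i)
      - path_weight g n * (\<Prod>i\<in>{1..n} - J. ?e t i) * (\<Prod>i\<in>J. 1 - ?e t i)"
    by (simp only: insert.IH[OF J t0] insert.IH[OF J insert.prems(2)])
  also have "\<dots> = path_weight g n * (\<Prod>i\<in>{1..n} - insert j J. ?e t i) * (\<Prod>i\<in>insert j J. 1 - ?e t i)"
  proof -
    have split: "{1..n} - J = insert j ({1..n} - insert j J)" using j by auto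
    have "(\<Prod>i\<in>J. 1 - ?e (t(j := 0)) i) = (\<Prod>i\<in>J. 1 - ?e t i)"
      "(\<Prod>i\<in>{1..n} - insert j J. ?e (t(j := 0)) i) = (\<Prod>i\<in>{1..n} - insert j J. ?e t i)"
      using j by (auto intro!: prod.cong)
    then show ?thesis
      unfolding split using insert.hyps by (simp add: algebra_simps)
  qed
  finally show ?case .
qed

lemma path_weight_nonneg: "0 \<le> path_weight g n"
proof -
  have "prob (path_event g n {} (\<lambda>_. 0)) = path_weight g n"
    using prob_path_event_empty[of n "\<lambda>_. 0" g] by simp
  then show ?thesis using measure_nonneg by metis
qed

text \<open>A path of length \<open>n\<close> of the jump chain is stored as a function that equals \<open>f\<close> after time \<open>n\<close>.\<close>
primrec paths :: "nat \<Rightarrow> (nat \<Rightarrow> 'h ips_state) set" where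
  "paths 0 = {\<lambda>_. f}"
| "paths (Suc n) = (\<lambda>(g, s). g(Suc n := s)) ` (SIGMA g:paths n. successors (g n))"

lemma paths_invariant:
  "finite (paths n) \<and> (\<forall>g\<in>paths n. (\<forall>i>n. g i = f) \<and>
     (\<forall>i\<le>n. finitely_supported (g i) \<and> rate (g i) \<le> rate f + rate_growth * i))"
proof (induction n)
  case 0
  then show ?case using finitely_supported_start by simp
next
  case (Suc n)
  have "finite (SIGMA g:paths n. successors (g n))"
    using Suc.IH finite_successors by (intro finite_SigmaI) auto
  moreover have "(\<forall>i>Suc n. g' i = f) \<and>
      (\<forall>i\<le>Suc n. finitely_supported (g' i) \<and> rate (g' i) \<le> rate f + rate_growth * i)"
    if path: "g' \<in> paths (Suc n)" for g'
  proof -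
    obtain g s where g: "g \<in> paths n" and s: "s \<in> successors (g n)" and g': "g' = g(Suc n := s)"
      using path by auto
    have "finitely_supported s \<and> rate s \<le> rate f + rate_growth * Suc n"
      using Suc.IH g successor_rate_le[OF _ s] by (fastforce simp: algebra_simps)
    then show ?thesis
      using Suc.IH g unfolding g' by (auto simp: le_Suc_eq)
  qed
  ultimately show ?case by simp
qed

lemma finite_paths: "finite (paths n)"
  using paths_invariant by blast

lemma paths_beyond: "g \<in> paths n \<Longrightarrow> n < i \<Longrightarrow> g i = f"
  using paths_invariant by blast

lemma paths_rate_le: "g \<in> paths n \<Longrightarrow> i \<le> n \<Longrightarrow> rate (g i) \<le> rate f + rate_growth * i"
  using paths_invariant by blast

lemma paths_finitely_supported: "g \<in> paths n \<Longrightarrow> i \<le> n \<Longrightarrow> finitely_supported (g i)"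
  using paths_invariant by blast

lemma paths_differ: "g \<in> paths n \<Longrightarrow> g' \<in> paths n \<Longrightarrow> g \<noteq> g' \<Longrightarrow> \<exists>i\<le>n. g i \<noteq> g' i"
  using paths_beyond by (metis ext not_le)

lemma sum_path_weight: "(\<Sum>g\<in>paths n. path_weight g n) = 1"
proof (induction n)
  case 0
  then show ?case by (simp add: path_weight_def)
next
  case (Suc n)
  let ?ext = "\<lambda>(g, s). g(Suc n := s)" and ?S = "SIGMA g:paths n. successors (g n)"
  have "inj_on ?ext ?S"
  proof (rule inj_onI, clarify)
    fix g s g' s' assume "g \<in> paths n" "g' \<in> paths n" and eq: "g(Suc n := s) = g'(Suc n := s')"
    then have "g (Suc n) = g' (Suc n)" by (simp add: paths_beyond)
    then have "g = g'" using fun_cong[OF eq] by (metis fun_upd_apply ext)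
    then show "g = g' \<and> s = s'" using fun_cong[OF eq, of "Suc n"] by simp
  qed
  moreover have "path_weight (g(Suc n := s)) (Suc n) = path_weight g n * jump_prob V E k m V0 (g n) s" for g s
  proof -
    have "(\<Prod>i\<in>{1..n}. jump_prob V E k m V0 ((g(Suc n := s)) (i - 1)) ((g(Suc n := s)) i))
        = (\<Prod>i\<in>{1..n}. jump_prob V E k m V0 (g (i - 1)) (g i))"
      by (intro prod.cong) auto
    moreover have "{1..Suc n} = insert (Suc n) {1..n}" by auto
    ultimately show ?thesis unfolding path_weight_def by simp
  qed
  ultimately have "(\<Sum>g\<in>paths (Suc n). path_weight g (Suc n))
      = (\<Sum>(g, s)\<in>?S. path_weight g n * jump_prob V E k m V0 (g n) s)"
    unfolding paths.simps by (subst sum.reindex) (auto simp: case_prod_unfold)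
  also have "\<dots> = (\<Sum>g\<in>paths n. path_weight g n * (\<Sum>s\<in>successors (g n). jump_prob V E k m V0 (g n) s))"
    unfolding sum_distrib_left
    by (rule sum.Sigma[symmetric]) (use finite_paths finite_successors paths_finitely_supported in auto)
  also have "\<dots> = 1"
    using Suc.IH paths_finitely_supported by (simp add: sum_jump_prob_successors)
  finally show ?case .
qed

lemma prob_paths_positive_holding: "prob (\<Union>g\<in>paths n. path_event g n {} (\<lambda>_. 0)) = 1"
proof -
  have "disjoint_family_on (\<lambda>g. path_event g n {} (\<lambda>_. 0)) (paths n)"
    unfolding disjoint_family_on_def
  proof (intro ballI impI)
    fix g g' assume "g \<in> paths n" "g' \<in> paths n" "g \<noteq> g'"
    then obtain i where "i \<le> n" "g i \<noteq> g' i" using paths_differ by blast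
    then show "path_event g n {} (\<lambda>_. 0) \<inter> path_event g' n {} (\<lambda>_. 0) = {}"
      unfolding path_event_def by auto
  qed
  then have "prob (\<Union>g\<in>paths n. path_event g n {} (\<lambda>_. 0)) = (\<Sum>g\<in>paths n. prob (path_event g n {} (\<lambda>_. 0)))"
    using finite_paths by (intro finite_measure_finite_Union) auto
  also have "\<dots> = (\<Sum>g\<in>paths n. path_weight g n)"
    by (simp add: prob_path_event_empty)
  finally show ?thesis using sum_path_weight by simp
qed

definition rate_scale :: real where
  "rate_scale = rate f + rate_growth + 1"

definition threshold :: "nat \<Rightarrow> real" where
  "threshold i = 1 / (rate_scale * i)"

lemma rate_scale_pos: "0 < rate_scale"
  unfolding rate_scale_def using rate_nonneg[of f] rate_growth_nonneg by linarith

lemma threshold_nonneg: "0 \<le> threshold i"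
  unfolding threshold_def using rate_scale_pos by simp

lemma exp_rate_threshold_bounds:
  assumes "g \<in> paths n" "i \<in> {1..n}"
  shows "exp (-1) \<le> exp (- rate (g (i - 1)) * threshold i) \<and> exp (- rate (g (i - 1)) * threshold i) \<le> 1"
proof -
  have "rate (g (i - 1)) \<le> rate f + rate_growth * (i - 1)"
    using paths_rate_le[OF assms(1), of "i - 1"] assms(2) by auto
  also have "\<dots> \<le> rate_scale * i"
  proof -
    have "rate f \<le> rate f * i" using assms(2) rate_nonneg[of f] by (simp add: mult_le_cancel_left1)
    moreover have "rate_growth * (i - 1) \<le> rate_growth * i"
      using rate_growth_nonneg by (simp add: mult_left_mono)
    ultimately show ?thesis unfolding rate_scale_def by (simp add: algebra_simps)
  qed
  finally have "rate (g (i - 1)) * threshold i \<le> 1"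
    using assms(2) rate_scale_pos by (simp add: threshold_def divide_le_eq_1)
  moreover have "0 \<le> rate (g (i - 1)) * threshold i"
    using rate_nonneg threshold_nonneg by simp
  ultimately show ?thesis by simp
qed

lemma prob_short_path_le:
  assumes "g \<in> paths n" "0 \<le> T"
  shows "prob (\<Union>J\<in>{J. J \<subseteq> {1..n} \<and> (\<Sum>i\<in>{1..n} - J. threshold i) \<le> T}. path_event g n J threshold)
    \<le> path_weight g n * (exp (rate_scale * T) * exp (- harm n / (2 * exp 1)))"
proof -
  let ?W = "{J. J \<subseteq> {1..n} \<and> (\<Sum>i\<in>{1..n} - J. threshold i) \<le> T}"
  let ?p = "\<lambda>i. exp (- rate (g (i - 1)) * threshold i)"
  have p: "\<And>i. i \<in> {1..n} \<Longrightarrow> exp (-1) \<le> ?p i \<and> ?p i \<le> 1"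
    using exp_rate_threshold_bounds[OF assms(1)] by blast
  have "finite ?W" by (rule finite_subset[of _ "Pow {1..n}"]) auto
  then have "prob (\<Union>J\<in>?W. path_event g n J threshold) \<le> (\<Sum>J\<in>?W. prob (path_event g n J threshold))"
    by (intro finite_measure_subadditive_finite) auto
  also have "\<dots> = path_weight g n * (\<Sum>J\<in>?W. (\<Prod>i\<in>{1..n} - J. ?p i) * (\<Prod>i\<in>J. 1 - ?p i))"
    unfolding sum_distrib_left by (intro sum.cong) (auto simp: prob_path_event threshold_nonneg)
  also have "\<dots> \<le> path_weight g n * (exp (rate_scale * T) * (\<Prod>i\<in>{1..n}. 1 - ?p i + ?p i * exp (- 1 / real i)))"
  proof -
    have "(\<Prod>i\<in>{1..n}. 1 - ?p i + ?p i * exp (- rate_scale * threshold i))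
        = (\<Prod>i\<in>{1..n}. 1 - ?p i + ?p i * exp (- 1 / real i))"
      using rate_scale_pos by (intro prod.cong) (auto simp: threshold_def)
    then show ?thesis
      using sum_subsets_threshold_le[of "{1..n}" rate_scale ?p threshold T] p rate_scale_pos
      by (intro mult_left_mono path_weight_nonneg) (auto simp: order_trans[OF exp_ge_zero])
  qed
  also have "\<dots> \<le> path_weight g n * (exp (rate_scale * T) * exp (- harm n / (2 * exp 1)))"
    using prod_holding_factors_le[of n ?p] p by (intro mult_left_mono path_weight_nonneg) auto
  finally show ?thesis .
qed

lemma short_partial_sum_subset:
  assumes "0 \<le> T"
  shows "{\<omega>\<in>space M. (\<Sum>i\<in>{1..n}. \<xi> i \<omega>) \<le> ennreal T} \<inter> (\<Union>g\<in>paths n. path_event g n {} (\<lambda>_. 0))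
    \<subseteq> (\<Union>g\<in>paths n. \<Union>J\<in>{J. J \<subseteq> {1..n} \<and> (\<Sum>i\<in>{1..n} - J. threshold i) \<le> T}. path_event g n J threshold)"
proof clarify
  fix \<omega> g assume sum_le: "(\<Sum>i\<in>{1..n}. \<xi> i \<omega>) \<le> ennreal T"
    and g: "g \<in> paths n" and \<omega>: "\<omega> \<in> path_event g n {} (\<lambda>_. 0)"
  define J where "J = {i\<in>{1..n}. \<xi> i \<omega> \<le> ennreal (threshold i)}"
  have "\<omega> \<in> path_event g n J threshold"
    using \<omega> unfolding path_event_def J_def by (auto simp: not_le)
  moreover have "J \<subseteq> {1..n}" unfolding J_def by auto
  moreover have "(\<Sum>i\<in>{1..n} - J. threshold i) \<le> T"
  proof -
    have "ennreal (\<Sum>i\<in>{1..n} - J. threshold i) = (\<Sum>i\<in>{1..n} - J. ennreal (threshold i))"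
      using threshold_nonneg by simp
    also have "\<dots> \<le> (\<Sum>i\<in>{1..n} - J. \<xi> i \<omega>)"
      by (intro sum_mono) (auto simp: J_def)
    also have "\<dots> \<le> (\<Sum>i\<in>{1..n}. \<xi> i \<omega>)"
      by (intro sum_mono2) auto
    finally have "ennreal (\<Sum>i\<in>{1..n} - J. threshold i) \<le> ennreal T"
      using sum_le by (rule order_trans)
    then show ?thesis using assms by simp
  qed
  ultimately show "\<omega> \<in> (\<Union>g\<in>paths n. \<Union>J\<in>{J. J \<subseteq> {1..n} \<and> (\<Sum>i\<in>{1..n} - J. threshold i) \<le> T}.
      path_event g n J threshold)"
    using g by blast
qed

lemma prob_partial_sum_le:
  assumes "0 \<le> T"
  shows "prob {\<omega>\<in>space M. (\<Sum>i\<in>{1..n}. \<xi> i \<omega>) \<le> ennreal T}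
    \<le> exp (rate_scale * T) * exp (- harm n / (2 * exp 1))"
proof -
  let ?Q = "{\<omega>\<in>space M. (\<Sum>i\<in>{1..n}. \<xi> i \<omega>) \<le> ennreal T}"
  let ?G = "\<Union>g\<in>paths n. path_event g n {} (\<lambda>_. 0)"
  let ?U = "\<lambda>g. \<Union>J\<in>{J. J \<subseteq> {1..n} \<and> (\<Sum>i\<in>{1..n} - J. threshold i) \<le> T}. path_event g n J threshold"
  let ?c = "exp (rate_scale * T) * exp (- harm n / (2 * exp 1))"
  have W: "finite {J. J \<subseteq> {1..n} \<and> (\<Sum>i\<in>{1..n} - J. threshold i) \<le> T}"
    by (rule finite_subset[of _ "Pow {1..n}"]) auto
  have sets: "?G \<in> sets M" "\<And>g. ?U g \<in> sets M" "(\<Union>g\<in>paths n. ?U g) \<in> sets M"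
    using finite_paths W by (auto intro!: sets.finite_UN)
  have "prob ?Q \<le> prob ((space M - ?G) \<union> (\<Union>g\<in>paths n. ?U g))"
    using short_partial_sum_subset[OF assms, of n] sets by (intro finite_measure_mono) auto
  also have "\<dots> \<le> prob (space M - ?G) + prob (\<Union>g\<in>paths n. ?U g)"
    using sets by (intro measure_subadditive) auto
  also have "\<dots> = prob (\<Union>g\<in>paths n. ?U g)"
    using prob_compl[OF sets(1)] prob_paths_positive_holding by simp
  also have "\<dots> \<le> (\<Sum>g\<in>paths n. prob (?U g))"
    using finite_paths sets by (intro finite_measure_subadditive_finite) auto
  also have "\<dots> \<le> (\<Sum>g\<in>paths n. path_weight g n * ?c)"
    using prob_short_path_le[OF _ assms] by (intro sum_mono) auto
  also have "\<dots> = ?c"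
    by (simp add: sum_path_weight flip: sum_distrib_right)
  finally show ?thesis .
qed

lemma prob_holding_sum_le:
  assumes "0 \<le> T"
  shows "prob {\<omega>\<in>space M. (\<Sum>n. \<xi> (Suc n) \<omega>) \<le> ennreal T} = 0"
proof -
  let ?R = "{\<omega>\<in>space M. (\<Sum>n. \<xi> (Suc n) \<omega>) \<le> ennreal T}"
  have bound: "prob ?R \<le> exp (rate_scale * T) * exp (- harm n / (2 * exp 1))" for n
  proof -
    have "(\<Sum>i\<in>{1..n}. \<xi> i \<omega>) \<le> (\<Sum>j. \<xi> (Suc j) \<omega>)" for \<omega>
      unfolding One_nat_def sum.atLeast1_atMost_eq by (intro sum_le_suminf) auto
    then have "prob ?R \<le> prob {\<omega>\<in>space M. (\<Sum>i\<in>{1..n}. \<xi> i \<omega>) \<le> ennreal T}"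
      by (intro finite_measure_mono) (auto intro: order_trans)
    then show ?thesis using prob_partial_sum_le[OF assms, of n] by linarith
  qed
  have limit: "(\<lambda>n. exp (rate_scale * T) * exp (- harm n / (2 * exp 1))) \<longlonglongrightarrow> 0"
  proof -
    have "filterlim (\<lambda>n. - (1 / (2 * exp 1)) * harm n :: real) at_bot sequentially"
      by (intro filterlim_tendsto_neg_mult_at_bot[OF tendsto_const _ harm_at_top]) simp
    then have "(\<lambda>n. exp (- harm n / (2 * exp 1)) :: real) \<longlonglongrightarrow> 0"
      using filterlim_compose[OF exp_at_bot] by simp
    then show ?thesis using tendsto_mult_right_zero by blast
  qed
  have "prob ?R \<le> 0" using bound by (intro LIMSEQ_le_const[OF limit]) auto
  then show ?thesis using measure_nonneg[of M ?R] by linarith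
qed

lemma prob_holding_sum_infinite: "prob {\<omega>\<in>space M. (\<Sum>n. \<xi> (Suc n) \<omega>) = \<infinity>} = 1"
proof -
  have "AE \<omega> in M. \<not> (\<Sum>n. \<xi> (Suc n) \<omega>) \<le> ennreal (real N)" for N
  proof -
    have "{\<omega>\<in>space M. (\<Sum>n. \<xi> (Suc n) \<omega>) \<le> ennreal (real N)} \<in> sets M" by measurable
    then show ?thesis using prob_Collect_eq_0 prob_holding_sum_le[of "real N"] by simp
  qed
  then have "AE \<omega> in M. \<forall>N. \<not> (\<Sum>n. \<xi> (Suc n) \<omega>) \<le> ennreal (real N)"
    by (simp add: AE_all_countable)
  then have "AE \<omega> in M. (\<Sum>n. \<xi> (Suc n) \<omega>) = \<infinity>"
  proof eventually_elim
    fix \<omega> assume unbounded: "\<forall>N. \<not> (\<Sum>n. \<xi> (Suc n) \<omega>) \<le> ennreal (real N)"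
    show "(\<Sum>n. \<xi> (Suc n) \<omega>) = \<infinity>"
    proof (rule ccontr)
      assume "(\<Sum>n. \<xi> (Suc n) \<omega>) \<noteq> \<infinity>"
      then have "(\<Sum>n. \<xi> (Suc n) \<omega>) < top" by (simp add: less_top)
      from ennreal_Ex_less_of_nat[OF this] obtain N where "(\<Sum>n. \<xi> (Suc n) \<omega>) < of_nat N" ..
      then have "(\<Sum>n. \<xi> (Suc n) \<omega>) \<le> ennreal (real N)"
        by (simp add: ennreal_of_nat_eq_real_of_nat)
      then show False using unbounded by blast
    qed
  qed
  then show ?thesis by (subst prob_Collect_eq_1) auto
qed

end

lemma good_graph_bounded_rate_graph:
  assumes "good_graph V E k m V0"
  obtains D B where "bounded_rate_graph V E k m D B"
proof -
  obtain D B where D: "\<forall>x\<in>V. finite {y. {x, y} \<in> E} \<and> card {y. {x, y} \<in> E} \<le> D"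
    and B: "\<forall>x\<in>V. 1 / m x \<le> B" "\<forall>\<epsilon>\<in>E. k \<epsilon> \<le> B"
    using assms unfolding good_graph_def by blast
  have "bounded_rate_graph V E k m D (max B 0)"
    using assms D B unfolding good_graph_def by unfold_locales auto
  then show ?thesis by (rule that)
qed

theorem theorem2p1:
  fixes V :: "'h::{real_inner,complete_space} set"
    and E :: "'h set set" and k :: "'h set \<Rightarrow> real" and m :: "'h \<Rightarrow> real" and V0 :: "'h set"
    and f :: "'h ips_state"
    and M :: "'w measure" and h :: "nat \<Rightarrow> 'w \<Rightarrow> 'h ips_state" and \<xi> :: "nat \<Rightarrow> 'w \<Rightarrow> ennreal"
  assumes "good_graph V E k m V0"
    and "f \<in> F0 V E"
    and "is_IPS V E k m V0 f M h \<xi>"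
  shows "measure M {\<omega> \<in> space M. (\<Sum>n. \<xi> (Suc n) \<omega>) = \<infinity>} = 1"
proof -
  obtain D B where "bounded_rate_graph V E k m D B"
    using assms(1) by (rule good_graph_bounded_rate_graph)
  then interpret bounded_rate_graph V E k m V0 D B .
  interpret ips_realisation V E k m V0 D B f M h \<xi>
    using assms(2,3) F0_finitely_supported by unfold_locales
  show ?thesis by (rule prob_holding_sum_infinite)
qed

end
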